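(* Let $(X,\|\cdot\|)$ be a Banach space, $B_X=\{x\in X:\|x\|\le1\}$ and $B=\{x\in X:\|x\|\ge2\}$. If the ordered pair $(B_X,B)$ has the $UC$ property, then $(X,\|\cdot\|)$ is a uniformly convex Banach space.
   Context: $\mathrm{dist}(A,B)=\inf\{\|a-b\|:a\in A,b\in B\}$. The ordered pair $(A,B)$ has the $UC$ property if for all sequences $\{x_n\},\{z_n\}\subset A$, $\{y_n\}\subset B$ with $\lim_n\|x_n-y_n\|=\lim_n\|z_n-y_n\|=\mathrm{dist}(A,B)$ one has $\lim_n\|x_n-z_n\|=0$. $X$ is uniformly convex if for every $\varepsilon\in(0,2]$, $\delta(\varepsilon)=\inf\{1-\|\frac{x+y}{2}\|: x,y\in B_X,\ \|x-y\|\ge\varepsilon\}>0$. *)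

theory Defs
  imports "HOL-Analysis.Analysis"
begin

definition UC_property :: "'a::real_normed_vector set \<Rightarrow> 'a set \<Rightarrow> bool" where
  "UC_property A B \<longleftrightarrow>
     (\<forall>x z y :: nat \<Rightarrow> 'a.
        (\<forall>n. x n \<in> A \<and> z n \<in> A \<and> y n \<in> B) \<and>
        (\<lambda>n. norm (x n - y n)) \<longlonglongrightarrow> setdist A B \<and>
        (\<lambda>n. norm (z n - y n)) \<longlonglongrightarrow> setdist A B
        \<longrightarrow> (\<lambda>n. norm (x n - z n)) \<longlonglongrightarrow> 0)"

text \<open>Modulus of convexity, valued in the extended reals so that inf of the empty set is +infinity.\<close>
definition modulus_convexity :: "'a::real_normed_vector itself \<Rightarrow> real \<Rightarrow> ereal" where
  "modulus_convexity _ e =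
     Inf ((\<lambda>(x::'a, y). ereal (1 - norm ((x + y) /\<^sub>R 2))) `
          {(x, y). norm x \<le> 1 \<and> norm y \<le> 1 \<and> norm (x - y) \<ge> e})"

definition uniformly_convex :: "'a::real_normed_vector itself \<Rightarrow> bool" where
  "uniformly_convex T \<longleftrightarrow> (\<forall>e. 0 < e \<and> e \<le> 2 \<longrightarrow> modulus_convexity T e > 0)"

end

theory Submission
  imports Defs
begin

text \<open>If the space is not uniformly convex, there are points \<open>x\<^sub>n, y\<^sub>n\<close> of the unit ball
  at distance at least \<open>\<epsilon>\<close> whose midpoint \<open>w\<^sub>n\<close> has norm tending to 1. Pushing \<open>w\<^sub>n\<close>
  radially to the sphere of radius 2 gives \<open>u\<^sub>n\<close> with \<open>\<parallel>x\<^sub>n - u\<^sub>n\<parallel> \<le> \<parallel>2w\<^sub>n - u\<^sub>n\<parallel> + \<parallel>y\<^sub>n\<parallel>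
  = 3 - 2\<parallel>w\<^sub>n\<parallel>\<close>, and symmetrically for \<open>y\<^sub>n\<close>. Both distances therefore tend to
  \<open>dist(B\<^sub>X, B) = 1\<close>, so the UC property forces \<open>\<parallel>x\<^sub>n - y\<^sub>n\<parallel> \<rightarrow> 0\<close>, a contradiction.\<close>

lemma norm_diff_ge_radii:
  fixes x y :: "'a::real_normed_vector"
  assumes "norm x \<le> r" "s \<le> norm y"
  shows "s - r \<le> norm (x - y)"
  using norm_triangle_ineq2[of y x] norm_minus_commute[of x y] assms by linarith

lemma setdist_cball_outside_ball:
  fixes v :: "'a::real_normed_vector"
  assumes "v \<noteq> 0" "0 \<le> r" "r \<le> s"
  shows "setdist (cball (0::'a) r) {x. s \<le> norm x} = s - r" (is "setdist ?A ?B = _")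
proof (rule antisym)
  define a where "a = (r / norm v) *\<^sub>R v"
  define b where "b = (s / norm v) *\<^sub>R v"
  have ab: "a \<in> ?A" "b \<in> ?B"
    using assms by (auto simp: a_def b_def)
  have "setdist ?A ?B \<le> norm (a - b)"
    using setdist_le_dist[OF ab] by (simp only: dist_norm)
  also have "a - b = ((r - s) / norm v) *\<^sub>R v"
    by (simp add: a_def b_def diff_divide_distrib scaleR_diff_left)
  also have "norm \<dots> = s - r"
    using assms by simp
  finally show "setdist ?A ?B \<le> s - r" .
  show "s - r \<le> setdist ?A ?B"
    by (rule le_setdistI) (use assms ab norm_diff_ge_radii in \<open>auto simp: dist_norm\<close>)
qed

lemma modulus_convexity_nonpos_sequences:
  assumes "modulus_convexity TYPE('a) e \<le> 0"
  obtains X Y :: "nat \<Rightarrow> 'a::real_normed_vector"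
  where "\<And>n. norm (X n) \<le> 1" "\<And>n. norm (Y n) \<le> 1" "\<And>n. e \<le> norm (X n - Y n)"
    and "\<And>n. 1/2 < norm ((X n + Y n) /\<^sub>R 2)"
    and "(\<lambda>n. norm ((X n + Y n) /\<^sub>R 2)) \<longlonglongrightarrow> 1"
proof -
  have "\<exists>x y :: 'a. norm x \<le> 1 \<and> norm y \<le> 1 \<and> e \<le> norm (x - y) \<and>
          1 - norm ((x + y) /\<^sub>R 2) < 1 / (real n + 2)" for n
  proof -
    have "modulus_convexity TYPE('a) e < ereal (1 / (real n + 2))"
      using assms by (rule le_less_trans) simp
    then show ?thesis
      unfolding modulus_convexity_def Inf_less_iff by auto
  qed
  then obtain X Y :: "nat \<Rightarrow> 'a" where XY: "\<And>n. norm (X n) \<le> 1" "\<And>n. norm (Y n) \<le> 1"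
      "\<And>n. e \<le> norm (X n - Y n)" "\<And>n. 1 - norm ((X n + Y n) /\<^sub>R 2) < 1 / (real n + 2)"
    by metis
  have step_bounds: "1 / (real n + 2) \<le> 1 / Suc n" "1 / (real n + 2) \<le> 1 / 2" for n
    by (simp_all add: frac_le)
  have XY_mid: "1 - norm ((X n + Y n) /\<^sub>R 2) < 1 / Suc n"
      "1/2 < norm ((X n + Y n) /\<^sub>R 2)" for n
    using XY(4)[of n] step_bounds[of n] by linarith+
  have "(\<lambda>n. norm ((X n + Y n) /\<^sub>R 2)) \<longlonglongrightarrow> 1"
  proof (rule tendsto_sandwich)
    have "1 - 1 / Suc n \<le> norm ((X n + Y n) /\<^sub>R 2)" for n
      using XY_mid(1)[of n] by linarith
    then show "\<forall>\<^sub>F n in sequentially. 1 - 1 / Suc n \<le> norm ((X n + Y n) /\<^sub>R 2)"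
      by simp
    have "norm ((X n + Y n) /\<^sub>R 2) \<le> 1" for n
      using XY(1,2)[of n] norm_triangle_ineq[of "X n" "Y n"] by simp
    then show "\<forall>\<^sub>F n in sequentially. norm ((X n + Y n) /\<^sub>R 2) \<le> 1"
      by simp
    show "(\<lambda>n. 1 - 1 / Suc n) \<longlonglongrightarrow> (1::real)"
      using tendsto_diff[OF tendsto_const LIMSEQ_inverse_real_of_nat, of 1]
      by (simp add: inverse_eq_divide)
  qed simp
  with XY(1-3) XY_mid(2) show ?thesis
    by (rule that)
qed

lemma norm_sub_radial_projection_le:
  fixes x y w :: "'a::real_normed_vector"
  assumes "x + y = 2 *\<^sub>R w" "norm y \<le> 1" "0 < norm w" "norm w \<le> 1"
  shows "norm (x - (2 / norm w) *\<^sub>R w) \<le> 3 - 2 * norm w"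
proof -
  have "x - (2 / norm w) *\<^sub>R w = (2 - 2 / norm w) *\<^sub>R w - y"
    using assms(1) by (simp add: algebra_simps)
  then have "norm (x - (2 / norm w) *\<^sub>R w) \<le> \<bar>2 - 2 / norm w\<bar> * norm w + norm y"
    by (metis norm_scaleR norm_triangle_ineq4)
  also have "\<bar>2 - 2 / norm w\<bar> * norm w = 2 - 2 * norm w"
    using assms(3,4) by (simp add: abs_if field_simps)
  finally show ?thesis
    using assms(2) by simp
qed

lemma tendsto_norm_sub_radial_projection:
  fixes P Q W :: "nat \<Rightarrow> 'a::real_normed_vector"
  assumes P: "\<And>n. norm (P n) \<le> 1" and Q: "\<And>n. norm (Q n) \<le> 1"
    and W: "\<And>n. P n + Q n = 2 *\<^sub>R W n" "\<And>n. 0 < norm (W n)" "(\<lambda>n. norm (W n)) \<longlonglongrightarrow> 1"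
  shows "(\<lambda>n. norm (P n - (2 / norm (W n)) *\<^sub>R W n)) \<longlonglongrightarrow> 1"
proof (rule tendsto_sandwich)
  have "1 \<le> norm (P n - (2 / norm (W n)) *\<^sub>R W n)" for n
    using norm_diff_ge_radii[OF P[of n], of 2] W(2)[of n] by simp
  then show "\<forall>\<^sub>F n in sequentially. 1 \<le> norm (P n - (2 / norm (W n)) *\<^sub>R W n)"
    by simp
  have "norm (2 *\<^sub>R W n) \<le> 2" for n
    using norm_triangle_ineq[of "P n" "Q n"] P[of n] Q[of n] W(1)[of n] by simp
  then have "norm (P n - (2 / norm (W n)) *\<^sub>R W n) \<le> 3 - 2 * norm (W n)" for n
    using norm_sub_radial_projection_le[OF W(1) Q W(2)] by simp
  then show "\<forall>\<^sub>F n in sequentially. norm (P n - (2 / norm (W n)) *\<^sub>R W n) \<le> 3 - 2 * norm (W n)"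
    by simp
  show "(\<lambda>n. 3 - 2 * norm (W n)) \<longlonglongrightarrow> 1"
    using tendsto_diff[OF tendsto_const tendsto_mult[OF tendsto_const W(3)], of 3 2] by simp
qed simp

theorem theorem44:
  assumes "UC_property (cball (0::'a::banach) 1) {x::'a. norm x \<ge> 2}"
  shows "uniformly_convex TYPE('a)"
proof (rule ccontr)
  assume "\<not> uniformly_convex TYPE('a)"
  then obtain e where "0 < e" and "modulus_convexity TYPE('a) e \<le> 0"
    unfolding uniformly_convex_def by (auto simp: not_less)
  from this(2) obtain X Y :: "nat \<Rightarrow> 'a" where XY: "\<And>n. norm (X n) \<le> 1" "\<And>n. norm (Y n) \<le> 1"
      "\<And>n. e \<le> norm (X n - Y n)" "\<And>n. 1/2 < norm ((X n + Y n) /\<^sub>R 2)"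
    and W_lim: "(\<lambda>n. norm ((X n + Y n) /\<^sub>R 2)) \<longlonglongrightarrow> 1"
    by (rule modulus_convexity_nonpos_sequences) blast
  define W where "W n = (X n + Y n) /\<^sub>R 2" for n
  define U where "U n = (2 / norm (W n)) *\<^sub>R W n" for n
  have W_pos: "0 < norm (W n)" for n
    using XY(4)[of n] by (auto simp: W_def)
  have U_norm: "norm (U n) = 2" for n
    using W_pos[of n] by (simp add: U_def)
  have "(\<lambda>n. norm (X n - U n)) \<longlonglongrightarrow> 1" "(\<lambda>n. norm (Y n - U n)) \<longlonglongrightarrow> 1"
    unfolding U_def using W_pos W_lim unfolding W_def
    by (intro tendsto_norm_sub_radial_projection; simp add: XY algebra_simps)+
  moreover have "setdist (cball (0::'a) 1) {x. 2 \<le> norm x} = 1"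
    using setdist_cball_outside_ball[of "U 0" 1 2] U_norm[of 0] by fastforce
  ultimately have "(\<lambda>n. norm (X n - Y n)) \<longlonglongrightarrow> 0"
    using assms[unfolded UC_property_def, rule_format, of X Y U] XY(1,2) U_norm by simp
  then have "e \<le> 0"
    by (rule LIMSEQ_le_const) (use XY(3) in blast)
  with \<open>0 < e\<close> show False by simp
qed

end
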